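(* Let $\mathsf{Mono(Ab)}$ denote the full subcategory of $\mathsf{PreOrdGrp}$ consisting of the preordered groups $(G,P_G)$ with $G$ abelian and $P_G$ a subgroup of $G$. The inclusion $U\colon\mathsf{Mono(Ab)}\to\mathsf{PreOrdGrp}$ has a left adjoint $F$ given on objects by $F(G,P_G)=(G/[G,G],\ grp(\eta_G(P_G)))$, where $\eta_G\colon G\to G/[G,G]$ is the abelianization quotient and $grp(\eta_G(P_G))$ is identified with the subgroup $\{x-y : x,y\in\eta_G(P_G)\}$ of $G/[G,G]$; the $(G,P_G)$-component of the unit is the morphism given by $\eta_G$ (with restriction $P_G\to grp(\eta_G(P_G))$, $p\mapsto\eta_G(p)$).
   Context: A preordered group is a pair $(G,P_G)$ with $G$ an additively written group (not necessarily abelian) and $P_G\subseteq G$ a submonoid closed under conjugation; morphisms $(G,P_G)\to(H,P_H)$ are group homomorphisms $f$ with $f(P_G)\subseteq P_H$. This is the category $\mathsf{PreOrdGrp}$. For a commutative monoid $M$, $grp(M)$ denotes its group completion; for a submonoid $M$ of an abelian group $X$ it is isomorphic to the subgroup $\{a-b : a,b\in M\}$ of $X$. *)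

theory Defs
  imports "HOL-Algebra.Algebra"
begin

definition preord_group :: "('a, 'm) monoid_scheme \<Rightarrow> 'a set \<Rightarrow> bool" where
  "preord_group G P \<longleftrightarrow> group G \<and> P \<subseteq> carrier G \<and> \<one>\<^bsub>G\<^esub> \<in> P
     \<and> (\<forall>x\<in>P. \<forall>y\<in>P. x \<otimes>\<^bsub>G\<^esub> y \<in> P)
     \<and> (\<forall>g\<in>carrier G. \<forall>p\<in>P. g \<otimes>\<^bsub>G\<^esub> p \<otimes>\<^bsub>G\<^esub> inv\<^bsub>G\<^esub> g \<in> P)"

definition preord_hom :: "('a, 'm) monoid_scheme \<Rightarrow> 'a set \<Rightarrow> ('b, 'n) monoid_scheme \<Rightarrow> 'b set
    \<Rightarrow> ('a \<Rightarrow> 'b) \<Rightarrow> bool" where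
  "preord_hom G P H Q f \<longleftrightarrow> f \<in> hom G H \<and> f ` P \<subseteq> Q"

definition mono_ab :: "('a, 'm) monoid_scheme \<Rightarrow> 'a set \<Rightarrow> bool" where
  "mono_ab G P \<longleftrightarrow> preord_group G P \<and> comm_group G \<and> subgroup P G"

definition abelianization :: "('a, 'm) monoid_scheme \<Rightarrow> 'a set monoid" where
  "abelianization G = G Mod (derived G (carrier G))"

definition ab_quot :: "('a, 'm) monoid_scheme \<Rightarrow> 'a \<Rightarrow> 'a set" where
  "ab_quot G x = r_coset G (derived G (carrier G)) x"

text \<open>Group completion of a submonoid M of an abelian group X, realised as
{a - b : a, b in M} (multiplicatively: a * b^-1).\<close>
definition grp_of :: "('a, 'm) monoid_scheme \<Rightarrow> 'a set \<Rightarrow> 'a set" where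
  "grp_of K S = {u \<otimes>\<^bsub>K\<^esub> inv\<^bsub>K\<^esub> v | u v. u \<in> S \<and> v \<in> S}"

definition F_cone :: "('a, 'm) monoid_scheme \<Rightarrow> 'a set \<Rightarrow> 'a set set" where
  "F_cone G P = grp_of (abelianization G) (ab_quot G ` P)"

end

theory Submission
  imports Defs
begin

text \<open>A homomorphism into an abelian group kills commutators, hence factors through the
abelianization, uniquely since the quotient map is surjective. In an abelian group the
quotients u v\<inverse> of elements of a submonoid form a subgroup, automatically closed under
conjugation. The factorisation sends such quotients of images of positive elements into Q,
because Q is a subgroup containing f(P).\<close>

lemma group_homI: "group G \<Longrightarrow> group H \<Longrightarrow> h \<in> hom G H \<Longrightarrow> group_hom G H h"
  by (intro group_hom.intro group_hom_axioms.intro)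

lemma preord_group_submonoid: "preord_group G P \<Longrightarrow> submonoid P G"
  unfolding preord_group_def by (auto intro: submonoid.intro)

lemma comm_group_subgroup_mono_ab:
  assumes "comm_group K" and "subgroup S K"
  shows "mono_ab K S"
proof -
  interpret comm_group K by fact
  interpret subgroup S K by fact
  have "g \<otimes>\<^bsub>K\<^esub> p \<otimes>\<^bsub>K\<^esub> inv\<^bsub>K\<^esub> g = p" if "g \<in> carrier K" "p \<in> S" for g p
    using that by (simp add: m_comm[of g p] m_assoc)
  then show ?thesis
    unfolding mono_ab_def preord_group_def using assms is_group by auto
qed

lemma (in group_hom) submonoid_image:
  assumes "submonoid S G"
  shows "submonoid (h ` S) H"
proof -
  interpret submonoid S G by fact
  show ?thesis
  proof
    show "h ` S \<subseteq> carrier H" by auto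
    show "\<one>\<^bsub>H\<^esub> \<in> h ` S" using one_closed hom_one by (metis image_eqI)
    show "x \<otimes>\<^bsub>H\<^esub> y \<in> h ` S" if "x \<in> h ` S" "y \<in> h ` S" for x y
      using that m_closed by (auto simp flip: hom_mult)
  qed
qed

lemma grp_of_subgroup:
  assumes "comm_group K" and "submonoid S K"
  shows "subgroup (grp_of K S) K"
proof -
  interpret comm_group K by fact
  interpret S: submonoid S K by fact
  show ?thesis
  proof (rule subgroupI)
    show "grp_of K S \<subseteq> carrier K" by (auto simp: grp_of_def)
    show "grp_of K S \<noteq> {}" using S.one_closed unfolding grp_of_def by blast
  next
    fix a assume "a \<in> grp_of K S"
    then obtain u v where uv: "u \<in> S" "v \<in> S" "a = u \<otimes>\<^bsub>K\<^esub> inv\<^bsub>K\<^esub> v"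
      by (auto simp: grp_of_def)
    then have "inv\<^bsub>K\<^esub> a = v \<otimes>\<^bsub>K\<^esub> inv\<^bsub>K\<^esub> u"
      by (simp add: inv_mult m_comm)
    then show "inv\<^bsub>K\<^esub> a \<in> grp_of K S" using uv unfolding grp_of_def by blast
  next
    fix a b assume "a \<in> grp_of K S" "b \<in> grp_of K S"
    then obtain u v u' v' where uv: "u \<in> S" "v \<in> S" "a = u \<otimes>\<^bsub>K\<^esub> inv\<^bsub>K\<^esub> v"
      "u' \<in> S" "v' \<in> S" "b = u' \<otimes>\<^bsub>K\<^esub> inv\<^bsub>K\<^esub> v'"
      by (auto simp: grp_of_def)
    then have "a \<otimes>\<^bsub>K\<^esub> b = (u \<otimes>\<^bsub>K\<^esub> u') \<otimes>\<^bsub>K\<^esub> inv\<^bsub>K\<^esub> (v \<otimes>\<^bsub>K\<^esub> v')"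
      by (simp add: inv_mult m_ac)
    then show "a \<otimes>\<^bsub>K\<^esub> b \<in> grp_of K S" using uv S.m_closed unfolding grp_of_def by blast
  qed
qed

lemma subset_grp_of:
  assumes "group K" and "submonoid S K"
  shows "S \<subseteq> grp_of K S"
proof
  interpret group K by fact
  interpret submonoid S K by fact
  fix u assume "u \<in> S"
  then have "u = u \<otimes>\<^bsub>K\<^esub> inv\<^bsub>K\<^esub> \<one>\<^bsub>K\<^esub>" by simp
  with \<open>u \<in> S\<close> one_closed show "u \<in> grp_of K S" unfolding grp_of_def by blast
qed

lemma grp_of_subset_subgroup:
  assumes "subgroup Q K" and "S \<subseteq> Q"
  shows "grp_of K S \<subseteq> Q"
  unfolding grp_of_def
  using assms subgroup.m_closed[OF assms(1)] subgroup.m_inv_closed[OF assms(1)] by blast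

lemma (in group_hom) image_grp_of:
  assumes "S \<subseteq> carrier G"
  shows "h ` grp_of G S = grp_of H (h ` S)"
proof
  show "h ` grp_of G S \<subseteq> grp_of H (h ` S)"
    using assms unfolding grp_of_def by (force simp: subset_iff)
  show "grp_of H (h ` S) \<subseteq> h ` grp_of G S"
  proof
    fix y assume "y \<in> grp_of H (h ` S)"
    then obtain u v where "u \<in> S" "v \<in> S" and y: "y = h u \<otimes>\<^bsub>H\<^esub> inv\<^bsub>H\<^esub> h v"
      unfolding grp_of_def by blast
    moreover have "y = h (u \<otimes> inv v)" using y assms \<open>u \<in> S\<close> \<open>v \<in> S\<close> by (simp add: subset_iff)
    ultimately show "y \<in> h ` grp_of G S" unfolding grp_of_def by blast
  qed
qed

lemma group_hom_ab_quot:
  assumes "group G"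
  shows "group_hom G (abelianization G) (ab_quot G)"
proof -
  interpret group G by fact
  interpret normal "derived G (carrier G)" G by (rule derived_self_is_normal)
  show ?thesis
    unfolding abelianization_def ab_quot_def
    by (intro group_homI is_group derived_quot_is_group r_coset_hom_Mod)
qed

lemma comm_group_abelianization: "group G \<Longrightarrow> comm_group (abelianization G)"
  unfolding abelianization_def by (rule group.derived_quot_is_comm_group)

lemma carrier_abelianization: "carrier (abelianization G) = ab_quot G ` carrier G"
  unfolding abelianization_def ab_quot_def by (simp add: carrier_FactGroup)

lemma (in group_hom) derived_subset_kernel:
  assumes "comm_group H"
  shows "derived G (carrier G) \<subseteq> kernel G H h"
proof
  fix x assume x: "x \<in> derived G (carrier G)"
  have "h ` derived G (carrier G) = derived H (h ` carrier G)"
    by (simp add: derived_img)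
  also have "\<dots> = {\<one>\<^bsub>H\<^esub>}"
    by (rule comm_group.derived_eq_singleton[OF assms]) auto
  finally have "h x = \<one>\<^bsub>H\<^esub>" using x by blast
  moreover have "x \<in> carrier G" using x G.derived_in_carrier by blast
  ultimately show "x \<in> kernel G H h" by (simp add: kernel_def)
qed

lemma (in group_hom) abelianization_universal:
  assumes "comm_group H"
  obtains g where "g \<in> hom (abelianization G) H"
    and "\<And>x. x \<in> carrier G \<Longrightarrow> g (ab_quot G x) = h x"
  using FactGroup_universal_kernel[OF G.derived_self_is_normal derived_subset_kernel[OF assms]]
  unfolding abelianization_def ab_quot_def by metis

lemma mono_ab_F_cone:
  assumes "preord_group G P"
  shows "mono_ab (abelianization G) (F_cone G P)"
proof -
  have G: "group G" using assms by (simp add: preord_group_def)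
  interpret group_hom G "abelianization G" "ab_quot G" by (rule group_hom_ab_quot[OF G])
  show ?thesis
    unfolding F_cone_def
    by (intro comm_group_subgroup_mono_ab grp_of_subgroup comm_group_abelianization G
        submonoid_image preord_group_submonoid assms)
qed

lemma preord_hom_ab_quot:
  assumes "preord_group G P"
  shows "preord_hom G P (abelianization G) (F_cone G P) (ab_quot G)"
proof -
  have G: "group G" using assms by (simp add: preord_group_def)
  interpret group_hom G "abelianization G" "ab_quot G" by (rule group_hom_ab_quot[OF G])
  have "ab_quot G ` P \<subseteq> F_cone G P"
    unfolding F_cone_def
    by (intro subset_grp_of H.is_group submonoid_image preord_group_submonoid assms)
  then show ?thesis unfolding preord_hom_def using homh by blast
qed

lemma abelianization_lift:
  assumes "preord_group G P" and "mono_ab H Q" and "preord_hom G P H Q f"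
  obtains g where "preord_hom (abelianization G) (F_cone G P) H Q g"
    and "\<forall>x\<in>carrier G. g (ab_quot G x) = f x"
proof -
  have G: "group G" and PG: "P \<subseteq> carrier G" using assms(1) by (auto simp: preord_group_def)
  have "comm_group H" and Q: "subgroup Q H" using assms(2) by (auto simp: mono_ab_def)
  have f: "f \<in> hom G H" and fP: "f ` P \<subseteq> Q" using assms(3) by (auto simp: preord_hom_def)
  interpret q: group_hom G "abelianization G" "ab_quot G" by (rule group_hom_ab_quot[OF G])
  interpret H: comm_group H by fact
  interpret f: group_hom G H f by (intro group_homI G H.is_group f)
  obtain g where g: "g \<in> hom (abelianization G) H"
    and gf: "\<And>x. x \<in> carrier G \<Longrightarrow> g (ab_quot G x) = f x"
    using f.abelianization_universal[OF \<open>comm_group H\<close>] by blast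
  interpret group_hom "abelianization G" H g by (intro group_homI g q.H.is_group H.is_group)
  have "ab_quot G ` P \<subseteq> carrier (abelianization G)" using PG by auto
  then have "g ` F_cone G P = grp_of H (g ` ab_quot G ` P)"
    unfolding F_cone_def by (rule image_grp_of)
  also have "g ` ab_quot G ` P = f ` P"
    unfolding image_image using PG gf by (intro image_cong) auto
  finally have "g ` F_cone G P \<subseteq> Q"
    using grp_of_subset_subgroup[OF Q fP] by simp
  with g have "preord_hom (abelianization G) (F_cone G P) H Q g"
    unfolding preord_hom_def by blast
  with gf show thesis by (intro that) auto
qed

lemma abelianization_factor_unique:
  assumes "\<forall>x\<in>carrier G. g (ab_quot G x) = f x" and "\<forall>x\<in>carrier G. g' (ab_quot G x) = f x"
  shows "\<forall>y\<in>carrier (abelianization G). g' y = g y"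
  using assms by (simp add: carrier_abelianization)

theorem proposition5p1:
  fixes G :: "('a, 'm) monoid_scheme" and P :: "'a set"
  assumes "preord_group G P"
  shows "mono_ab (abelianization G) (F_cone G P)
    \<and> preord_hom G P (abelianization G) (F_cone G P) (ab_quot G)
    \<and> (\<forall>(H :: ('b, 'n) monoid_scheme) Q f. mono_ab H Q \<longrightarrow> preord_hom G P H Q f \<longrightarrow>
         (\<exists>g. preord_hom (abelianization G) (F_cone G P) H Q g
              \<and> (\<forall>x\<in>carrier G. g (ab_quot G x) = f x)
              \<and> (\<forall>g'. preord_hom (abelianization G) (F_cone G P) H Q g'
                     \<and> (\<forall>x\<in>carrier G. g' (ab_quot G x) = f x)
                     \<longrightarrow> (\<forall>y\<in>carrier (abelianization G). g' y = g y))))"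
proof (intro conjI allI impI mono_ab_F_cone preord_hom_ab_quot assms)
  fix H :: "('b, 'n) monoid_scheme" and Q f
  assume "mono_ab H Q" and "preord_hom G P H Q f"
  then obtain g where "preord_hom (abelianization G) (F_cone G P) H Q g"
    and gf: "\<forall>x\<in>carrier G. g (ab_quot G x) = f x"
    using abelianization_lift[OF assms] by metis
  then show "\<exists>g. preord_hom (abelianization G) (F_cone G P) H Q g
      \<and> (\<forall>x\<in>carrier G. g (ab_quot G x) = f x)
      \<and> (\<forall>g'. preord_hom (abelianization G) (F_cone G P) H Q g'
             \<and> (\<forall>x\<in>carrier G. g' (ab_quot G x) = f x)
             \<longrightarrow> (\<forall>y\<in>carrier (abelianization G). g' y = g y))"
    using abelianization_factor_unique[OF gf] by blast
qed

end
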